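(* In the setting of the non-linear gradient flow (i) above, fix two indices $\lambda,\lambda'\in\{1,\dots,r_X\}$ with $y_\lambda>0$, $y_{\lambda'}>0$ and $\tilde y_\lambda\neq\tilde y_{\lambda'}$, and fix $\epsilon\in(0,\theta^\ast_\lambda)$. Suppose the initialization is $\theta^0_\kappa=\sigma\tilde\theta^0_\kappa$ for $\kappa\in\{\lambda,\lambda'\}$, with fixed $\tilde\theta^0_\kappa>0$ and a scale $\sigma>0$ small enough that $\theta^0_\lambda<\theta^\ast_\lambda-\epsilon$ and $\theta^0_{\lambda'}<\theta^\ast_{\lambda'}$. Let $t_\lambda=t_\lambda(\epsilon,\sigma)$ be the (unique) time at which $|\theta_\lambda(t)-\theta^\ast_\lambda|=\epsilon$. Then $$\lim_{\sigma\to 0}\theta_{\lambda'}(t_\lambda)=\begin{cases}\theta^\ast_{\lambda'} & \text{if } \tilde y_{\lambda'}>\tilde y_\lambda,\\ 0 & \text{if } \tilde y_{\lambda'}<\tilde y_\lambda.\end{cases}$$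
   Context: Setting: $\bm X=\sum_{\lambda=1}^{r_X}\sqrt{\mu_\lambda}\bm u_\lambda\bm v_\lambda^\top$ (SVD, $\mu_\lambda>0$ for $\lambda\le r_X$), labels $\bm y$ with $y_\lambda=\bm u_\lambda^\top\bm y\ge0$, $\theta^\ast_\lambda=y_\lambda/\sqrt{\mu_\lambda}$, $\tilde y_\lambda=\sqrt{\mu_\lambda}y_\lambda$. The non-linear dynamics is gradient flow on $\mathbf w$ of $\ell(\mathbf w)=\frac12\|\bm X\bm\theta(\mathbf w)-\bm y\|^2$ with $\bm\theta(\mathbf w)=\frac12\sum_\lambda w_\lambda^2\bm v_\lambda$, whose components are $\theta_\kappa(t)=\dfrac{\theta^0_\kappa\theta^\ast_\kappa}{\theta^0_\kappa-e^{-2\tilde y_\kappa t}(\theta^0_\kappa-\theta^\ast_\kappa)}$ for $\theta^\ast_\kappa\neq0$, where $\theta^0_\kappa=\frac12(w^0_\kappa)^2$. *)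

theory Defs
  imports "HOL-Analysis.Analysis"
begin

text \<open>Closed-form solution of the non-linear gradient flow for one component kappa
  with theta-star nonzero: initial value th0, target ths = theta-star, rate yt = y-tilde.\<close>
definition flow_comp :: "real \<Rightarrow> real \<Rightarrow> real \<Rightarrow> real \<Rightarrow> real" where
  "flow_comp th0 ths yt t = th0 * ths / (th0 - exp (- 2 * yt * t) * (th0 - ths))"

definition theta_star :: "real \<Rightarrow> real \<Rightarrow> real" where
  "theta_star mu y = y / sqrt mu"

definition y_tilde :: "real \<Rightarrow> real \<Rightarrow> real" where
  "y_tilde mu y = sqrt mu * y"

definition hit_time :: "real \<Rightarrow> real \<Rightarrow> real \<Rightarrow> real \<Rightarrow> real" where
  "hit_time th0 ths yt eps = (THE t. t \<ge> 0 \<and> \<bar>flow_comp th0 ths yt t - ths\<bar> = eps)"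

end

theory Submission imports Defs begin

text \<open>The hitting time is explicit: with initial value \<open>\<sigma> c\<close> it satisfies
  \<open>exp (-2 b t) = \<sigma> K(\<sigma>)\<close>, where \<open>K(\<sigma>)\<close> tends to a positive limit as \<open>\<sigma> \<rightarrow> 0\<close>.
  A component with rate \<open>b'\<close> sees \<open>exp (-2 b' t) = (\<sigma> K(\<sigma>)) powr r\<close>, \<open>r = b'/b\<close>, so at the
  hitting time it equals \<open>c' a' / (c' + \<sigma> powr (r - 1) K(\<sigma>) powr r (a' - \<sigma> c'))\<close>:
  the factor \<open>\<sigma> powr (r - 1)\<close> vanishes when \<open>r > 1\<close> (limit \<open>a'\<close>) and blows up
  when \<open>r < 1\<close> (limit \<open>0\<close>).\<close>

lemma target_minus_flow_comp:
  fixes th0 a b t :: real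
  assumes "0 < th0" "th0 < a"
  shows "a - flow_comp th0 a b t
           = a * exp (-2*b*t) * (a - th0) / (th0 + exp (-2*b*t) * (a - th0))"
proof -
  have "th0 + exp (-2*b*t) * (a - th0) > 0"
    using assms by (simp add: add_pos_pos)
  then show ?thesis
    unfolding flow_comp_def by (simp add: field_simps)
qed

lemma hit_time_eq:
  fixes a b eps th0 :: real
  assumes "a > 0" "b > 0" "eps > 0" "th0 > 0" "th0 < a - eps"
  shows "hit_time th0 a b eps = - ln (th0*eps/((a-eps)*(a-th0))) / (2*b)"
proof -
  define E where "E = th0*eps/((a-eps)*(a-th0))"
  have E_pos: "E > 0" and E_less_1: "E < 1"
    using assms by (auto simp: E_def divide_simps intro: mult_strict_mono)
  have dist_eq: "\<bar>flow_comp th0 a b t - a\<bar> = eps \<longleftrightarrow> exp (-2*b*t) = E" for t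
  proof -
    define x where "x = exp (-2*b*t)"
    have "x > 0" "th0 + x*(a-th0) > 0"
      using assms by (auto simp: x_def add_pos_pos)
    moreover have "a*x*(a-th0) / (th0 + x*(a-th0)) > 0"
      using \<open>x > 0\<close> \<open>th0 + x*(a-th0) > 0\<close> assms by simp
    ultimately have "\<bar>flow_comp th0 a b t - a\<bar> = a*x*(a-th0) / (th0 + x*(a-th0))"
      using target_minus_flow_comp[of th0 a b t] assms by (simp add: x_def abs_minus_commute)
    also have "\<dots> = eps \<longleftrightarrow> x * ((a-eps)*(a-th0)) = th0*eps"
      using \<open>th0 + x*(a-th0) > 0\<close> by (simp add: divide_simps algebra_simps)
    also have "\<dots> \<longleftrightarrow> x = E"
      using assms by (auto simp: E_def eq_divide_eq)
    finally show ?thesis by (simp add: x_def)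
  qed
  have "hit_time th0 a b eps = - ln E / (2*b)"
    unfolding hit_time_def
  proof (rule the_equality)
    show "0 \<le> - ln E / (2*b) \<and> \<bar>flow_comp th0 a b (- ln E / (2*b)) - a\<bar> = eps"
      using assms E_pos E_less_1 dist_eq by (simp add: divide_simps)
  next
    fix t assume "0 \<le> t \<and> \<bar>flow_comp th0 a b t - a\<bar> = eps"
    then have "-2*b*t = ln E"
      using dist_eq by (metis ln_exp)
    then show "t = - ln E / (2*b)"
      using assms by (simp add: field_simps)
  qed
  then show ?thesis by (simp add: E_def)
qed

lemma exp_hit_time_powr:
  fixes a b b' eps th0 :: real
  assumes "a > 0" "b > 0" "eps > 0" "th0 > 0" "th0 < a - eps"
  shows "exp (-2*b'*hit_time th0 a b eps) = (th0*eps/((a-eps)*(a-th0))) powr (b'/b)"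
proof -
  have "th0*eps/((a-eps)*(a-th0)) > 0"
    using assms by simp
  then show ?thesis
    using assms by (simp add: hit_time_eq powr_def)
qed

lemma flow_comp_at_hit_time:
  fixes a b a' b' c c' eps s :: real
  assumes "a > 0" "b > 0" "eps > 0" "c > 0" "c' > 0" "s > 0"
    and "s * c < a - eps"
  shows "flow_comp (s * c') a' b' (hit_time (s * c) a b eps) =
     c' * a' / (c' + s powr (b'/b - 1) * (c*eps/((a-eps)*(a-s*c))) powr (b'/b) * (a' - s*c'))"
proof -
  define K where "K = c*eps/((a-eps)*(a-s*c))"
  define r where "r = b'/b"
  have "a - s*c > 0" "a - eps > 0"
    using assms mult_pos_pos[of s c] by linarith+
  then have "K > 0"
    using assms by (simp add: K_def)
  have "exp (-2*b'*hit_time (s*c) a b eps) = (s*K) powr r"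
    using exp_hit_time_powr[of a b eps "s*c" b'] assms by (simp add: K_def r_def mult.assoc)
  also have "\<dots> = s * (s powr (r-1) * K powr r)"
    using \<open>s > 0\<close> \<open>K > 0\<close> by (simp add: powr_mult powr_diff)
  finally have "flow_comp (s * c') a' b' (hit_time (s * c) a b eps)
      = s * (c'*a') / (s * (c' + s powr (r-1) * K powr r * (a'-s*c')))"
    unfolding flow_comp_def by (simp add: algebra_simps)
  then show ?thesis
    using \<open>s > 0\<close> by (simp add: K_def r_def)
qed

lemma tendsto_at_right_0_fast:
  fixes r c a :: real and g :: "real \<Rightarrow> real"
  assumes "r > 1" "c > 0" "(g \<longlongrightarrow> L) (at_right 0)"
  shows "((\<lambda>s. c * a / (c + s powr (r - 1) * g s)) \<longlongrightarrow> a) (at_right 0)"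
proof -
  have "((\<lambda>s. s powr (r - 1)) \<longlongrightarrow> 0) (at_right 0)"
    using \<open>r > 1\<close>
    by (intro tendsto_zero_powrI) (auto intro: tendsto_ident_at eventually_at_right_less[THEN eventually_mono])
  then have "((\<lambda>s. c * a / (c + s powr (r - 1) * g s)) \<longlongrightarrow> c * a / (c + 0 * L)) (at_right 0)"
    using assms by (intro tendsto_intros) auto
  then show ?thesis
    using \<open>c > 0\<close> by simp
qed

lemma tendsto_at_right_0_slow:
  fixes r c a :: real and g :: "real \<Rightarrow> real"
  assumes "r < 1" "(g \<longlongrightarrow> L) (at_right 0)" "L > 0"
  shows "((\<lambda>s. c * a / (c + s powr (r - 1) * g s)) \<longlongrightarrow> 0) (at_right 0)"
proof -
  have "((\<lambda>s. s powr (1 - r)) \<longlongrightarrow> 0) (at_right 0)"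
    using \<open>r < 1\<close>
    by (intro tendsto_zero_powrI) (auto intro: tendsto_ident_at eventually_at_right_less[THEN eventually_mono])
  then have "LIM s at_right 0. inverse (s powr (1 - r)) :> at_top"
    by (rule filterlim_inverse_at_top) (auto intro: eventually_at_right_less[THEN eventually_mono])
  moreover have "\<forall>\<^sub>F s in at_right 0. inverse (s powr (1 - r)) = s powr (r - 1)"
    by (rule eventually_at_right_less[THEN eventually_mono]) (simp add: powr_minus[symmetric])
  ultimately have "LIM s at_right 0. s powr (r - 1) :> at_top"
    using filterlim_cong by fastforce
  then have "LIM s at_right 0. g s * s powr (r - 1) :> at_top"
    using assms by (intro filterlim_tendsto_pos_mult_at_top)
  then have "LIM s at_right 0. c + s powr (r - 1) * g s :> at_top"
    by (intro filterlim_tendsto_add_at_top[OF tendsto_const]) (simp add: ac_simps)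
  then show ?thesis
    by (intro tendsto_divide_0[OF tendsto_const] filterlim_at_top_imp_at_infinity)
qed

theorem mainTheorem2:
  fixes mu y :: "nat \<Rightarrow> real" and rX l l' :: nat
    and eps :: real and th0t :: "nat \<Rightarrow> real"
  assumes mu_pos: "\<And>k. k \<in> {1..rX} \<Longrightarrow> mu k > 0"
    and y_nonneg: "\<And>k. k \<in> {1..rX} \<Longrightarrow> y k \<ge> 0"
    and l: "l \<in> {1..rX}" and l': "l' \<in> {1..rX}"
    and yl: "y l > 0" and yl': "y l' > 0"
    and ydiff: "y_tilde (mu l) (y l) \<noteq> y_tilde (mu l') (y l')"
    and eps: "0 < eps" "eps < theta_star (mu l) (y l)"
    and th0t: "th0t l > 0" "th0t l' > 0"
  shows "(y_tilde (mu l') (y l') > y_tilde (mu l) (y l) \<longrightarrow>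
            ((\<lambda>\<sigma>. flow_comp (\<sigma> * th0t l') (theta_star (mu l') (y l')) (y_tilde (mu l') (y l'))
                 (hit_time (\<sigma> * th0t l) (theta_star (mu l) (y l)) (y_tilde (mu l) (y l)) eps))
              \<longlongrightarrow> theta_star (mu l') (y l')) (at_right 0))
       \<and> (y_tilde (mu l') (y l') < y_tilde (mu l) (y l) \<longrightarrow>
            ((\<lambda>\<sigma>. flow_comp (\<sigma> * th0t l') (theta_star (mu l') (y l')) (y_tilde (mu l') (y l'))
                 (hit_time (\<sigma> * th0t l) (theta_star (mu l) (y l)) (y_tilde (mu l) (y l)) eps))
              \<longlongrightarrow> 0) (at_right 0))"
proof -
  define a b a' b' c c' where "a = theta_star (mu l) (y l)" "b = y_tilde (mu l) (y l)"
    "a' = theta_star (mu l') (y l')" "b' = y_tilde (mu l') (y l')" "c = th0t l" "c' = th0t l'"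
  have pos: "a > 0" "b > 0" "a' > 0" "b' > 0" "c > 0" "c' > 0"
    using mu_pos l l' yl yl' th0t by (simp_all add: a_b_a'_b'_c_c'_def theta_star_def y_tilde_def)
  have "eps < a" using eps by (simp add: a_b_a'_b'_c_c'_def)
  define g where "g s = (c*eps/((a-eps)*(a-s*c))) powr (b'/b) * (a' - s*c')" for s
  have "((\<lambda>s. s * c) \<longlongrightarrow> 0) (at_right 0)"
    by (intro tendsto_eq_intros) auto
  then have "\<forall>\<^sub>F s in at_right 0. s * c < a - eps"
    using \<open>eps < a\<close> by (intro order_tendstoD(2)) auto
  then have same: "\<forall>\<^sub>F s in at_right 0. flow_comp (s * c') a' b' (hit_time (s * c) a b eps)
                     = c' * a' / (c' + s powr (b'/b - 1) * g s)"
    using eventually_at_right_less by (rule eventually_elim2)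
      (use pos eps in \<open>simp add: flow_comp_at_hit_time g_def mult.assoc\<close>)
  have g_lim: "(g \<longlongrightarrow> (c*eps/((a-eps)*a)) powr (b'/b) * a') (at_right 0)"
    unfolding g_def using pos \<open>eps < a\<close> by (intro tendsto_intros) (auto intro!: tendsto_eq_intros)
  have g_lim_pos: "(c*eps/((a-eps)*a)) powr (b'/b) * a' > 0"
    using pos eps \<open>eps < a\<close> by simp
  have "b < b' \<Longrightarrow> b'/b > 1" "b' < b \<Longrightarrow> b'/b < 1"
    using pos by (simp_all add: field_simps)
  then show ?thesis
    using tendsto_at_right_0_fast[OF _ _ g_lim] tendsto_at_right_0_slow[OF _ g_lim g_lim_pos]
      tendsto_cong[OF same] pos
    by (simp add: a_b_a'_b'_c_c'_def)
qed

end
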